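(* Let $p\in(0,1)$ and let $\ell_p$ be the space of real sequences $(x_n)_{n=1}^\infty$ with $\sum_{n=1}^\infty|x_n|^p<\infty$, with its $p$-norm $\|x\|_p=\sum_{n=1}^\infty|x_n|^p$. Let $e_n=(0,\ldots,0,1,0,\ldots)$ (with $1$ in the $n$th place). Then for any infinite dimensional subspace $\mathcal{S}$ of $\ell_\infty$ properly containing $c_0$, there is no subset of $\ell_p$ that is $[(e_n)_{n=1}^\infty,\mathcal{S}]$-lineable.
   Context: $\ell_\infty$ is the space of bounded real sequences and $c_0$ the space of real sequences converging to $0$, viewed as subspaces of $\mathbb{R}^{\mathbb{N}}$. For a subspace $\mathcal{S}$ of $\mathbb{R}^{\mathbb{N}}$ and a sequence $(u_n)$ in a topological vector space $X$, a subset $A\subset X$ is $[(u_n)_{n=1}^\infty,\mathcal{S}]$-lineable if for each $(c_n)_{n=1}^\infty\in\mathcal{S}$ the series $\sum_{n=1}^\infty c_nu_n$ converges in $X$ to a vector of $A\cup\{0\}$. Here $\ell_p$ carries the topology induced by its $p$-norm. *)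

theory Defs
  imports "HOL-Analysis.Analysis"
begin

text \<open>Real sequences are functions nat => real (indexing from 0).\<close>

definition linf :: "(nat \<Rightarrow> real) set" where
  "linf = {x. \<exists>M. \<forall>n. \<bar>x n\<bar> \<le> M}"

definition c0 :: "(nat \<Rightarrow> real) set" where
  "c0 = {x. x \<longlonglongrightarrow> 0}"

definition lp :: "real \<Rightarrow> (nat \<Rightarrow> real) set" where
  "lp p = {x. summable (\<lambda>n. \<bar>x n\<bar> powr p)}"

definition pnorm :: "real \<Rightarrow> (nat \<Rightarrow> real) \<Rightarrow> real" where
  "pnorm p x = (\<Sum>n. \<bar>x n\<bar> powr p)"

definition lp_dist :: "real \<Rightarrow> (nat \<Rightarrow> real) \<Rightarrow> (nat \<Rightarrow> real) \<Rightarrow> real" where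
  "lp_dist p x y = pnorm p (\<lambda>n. x n - y n)"

definition seq_subspace :: "(nat \<Rightarrow> real) set \<Rightarrow> bool" where
  "seq_subspace S \<longleftrightarrow> (\<lambda>n. 0) \<in> S \<and>
     (\<forall>x\<in>S. \<forall>y\<in>S. (\<lambda>n. x n + y n) \<in> S) \<and>
     (\<forall>a. \<forall>x\<in>S. (\<lambda>n. a * x n) \<in> S)"

definition seq_span :: "(nat \<Rightarrow> real) set \<Rightarrow> (nat \<Rightarrow> real) set" where
  "seq_span B = {y. \<exists>a. y = (\<lambda>n. \<Sum>b\<in>B. a b * b n)}"

definition infinite_dim :: "(nat \<Rightarrow> real) set \<Rightarrow> bool" where
  "infinite_dim S \<longleftrightarrow> (\<forall>B. finite B \<longrightarrow> \<not> S \<subseteq> seq_span B)"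

definition unitvec :: "nat \<Rightarrow> nat \<Rightarrow> real" where
  "unitvec n = (\<lambda>k. if k = n then 1 else 0)"

definition lp_series_conv :: "real \<Rightarrow> (nat \<Rightarrow> real) \<Rightarrow> (nat \<Rightarrow> nat \<Rightarrow> real) \<Rightarrow> (nat \<Rightarrow> real) \<Rightarrow> bool" where
  "lp_series_conv p c u y \<longleftrightarrow> y \<in> lp p \<and>
     (\<lambda>N. lp_dist p (\<lambda>k. \<Sum>n<N. c n * u n k) y) \<longlonglongrightarrow> 0"

definition lp_lineable :: "real \<Rightarrow> (nat \<Rightarrow> nat \<Rightarrow> real) \<Rightarrow> (nat \<Rightarrow> real) set \<Rightarrow> (nat \<Rightarrow> real) set \<Rightarrow> bool" where
  "lp_lineable p u S A \<longleftrightarrow>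
     (\<forall>c\<in>S. \<exists>y. lp_series_conv p c u y \<and> y \<in> A \<union> {(\<lambda>n. 0)})"

end

theory Submission
  imports Defs
begin

text \<open>If \<open>\<Sum> c\<^sub>n e\<^sub>n\<close> converges in \<open>\<ell>\<^sub>p\<close>, its sum must be \<open>c\<close> itself, because
  each coordinate contributes separately to the \<open>p\<close>-norm of the error. Lineability over
  \<open>S \<supseteq> c\<^sub>0\<close> would therefore force \<open>c\<^sub>0 \<subseteq> \<ell>\<^sub>p\<close>, which fails for
  \<open>c\<^sub>n = n\<^sup>-\<^sup>1\<^sup>/\<^sup>p\<close>.\<close>

lemma sum_scaled_unitvec:
  "(\<Sum>n<N. c n * unitvec n k) = (if k < N then c k else 0)"
  unfolding unitvec_def by (auto simp: if_distrib cong: if_cong)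

lemma lp_series_conv_unitvec_imp_eq:
  assumes "lp_series_conv p c unitvec y"
  shows "y = c"
proof
  fix k
  from assms have y_lp: "y \<in> lp p"
    and lim: "(\<lambda>N. lp_dist p (\<lambda>k. \<Sum>n<N. c n * unitvec n k) y) \<longlonglongrightarrow> 0"
    unfolding lp_series_conv_def by auto
  have "\<bar>c k - y k\<bar> powr p \<le> 0"
  proof (rule LIMSEQ_le_const[OF lim], intro exI allI impI)
    fix N assume "Suc k \<le> N"
    let ?err = "\<lambda>n. \<bar>(\<Sum>m<N. c m * unitvec m n) - y n\<bar> powr p"
    have "eventually (\<lambda>n. ?err n = \<bar>y n\<bar> powr p) sequentially"
      using eventually_ge_at_top[of N] by eventually_elim (simp add: sum_scaled_unitvec)
    then have "summable ?err"
      using y_lp unfolding lp_def by (simp add: summable_cong)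
    then have "sum ?err {k} \<le> suminf ?err"
      by (intro sum_le_suminf) auto
    then show "\<bar>c k - y k\<bar> powr p \<le> lp_dist p (\<lambda>k. \<Sum>n<N. c n * unitvec n k) y"
      using \<open>Suc k \<le> N\<close> unfolding lp_dist_def pnorm_def by (simp add: sum_scaled_unitvec)
  qed
  then have "\<bar>c k - y k\<bar> powr p = 0"
    by (meson order.antisym powr_ge_zero)
  then show "y k = c k" by simp
qed

lemma lp_lineable_unitvec_subset_lp:
  assumes "lp_lineable p unitvec S A"
  shows "S \<subseteq> lp p"
proof
  fix c assume "c \<in> S"
  with assms obtain y where "lp_series_conv p c unitvec y"
    unfolding lp_lineable_def by blast
  then show "c \<in> lp p"
    using lp_series_conv_unitvec_imp_eq lp_series_conv_def by blast
qed

lemma c0_not_subset_lp: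
  assumes "0 < p"
  shows "\<not> c0 \<subseteq> lp p"
proof -
  define c :: "nat \<Rightarrow> real" where "c n = real n powr (-1/p)" for n
  have "c \<longlonglongrightarrow> 0"
    unfolding c_def using assms by (intro tendsto_neg_powr filterlim_real_sequentially) auto
  moreover have "\<bar>c n\<bar> powr p = real n powr (-1)" for n
    unfolding c_def using assms by (simp add: powr_powr)
  then have "\<not> summable (\<lambda>n. \<bar>c n\<bar> powr p)"
    using summable_real_powr_iff[of "-1"] by simp
  ultimately show ?thesis
    unfolding c0_def lp_def by blast
qed

theorem mainTheorem4:
  fixes p :: real and S :: "(nat \<Rightarrow> real) set"
  assumes "0 < p" and "p < 1"
    and "seq_subspace S" and "S \<subseteq> linf" and "infinite_dim S"
    and "c0 \<subset> S"
  shows "\<not> (\<exists>A. A \<subseteq> lp p \<and> lp_lineable p unitvec S A)"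
proof
  assume "\<exists>A. A \<subseteq> lp p \<and> lp_lineable p unitvec S A"
  then have "S \<subseteq> lp p"
    using lp_lineable_unitvec_subset_lp by blast
  with \<open>c0 \<subset> S\<close> have "c0 \<subseteq> lp p" by blast
  with c0_not_subset_lp \<open>0 < p\<close> show False by blast
qed

end
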